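(* Let $d\ge2$ and $R>0$, and let $P\subseteq R\mathbb{B}_2^d$ be a simple bounded polytope containing the origin in its interior, with polar $P^\circ=\{y:\langle x,y\rangle\le1\ \forall x\in P\}$. Suppose every facet of $P^\circ$ has Euclidean diameter at most $\gamma>0$. Then for every $c\in\mathbb{S}^{d-1}$, every vertex $v^+$ of $P$ maximizing $c^\top x$ and every vertex $v^-$ of $P$ minimizing $c^\top x$, there is no simplex path from $v^+$ to $v^-$ of length less than $(d-1)\big(\frac{2}{R\gamma}-2\big)$.
   Context: Write $P=\{x: a_j^\top x\le 1,\ j\in[n]\}$ as a minimal inequality description. A simplex path of length $k$ from $v^+$ to $v^-$ is a sequence $B^0,\dots,B^k\in\binom{[n]}{d}$ of feasible bases of $P$ (index sets whose constraints are tight at a vertex of $P$ and linearly independent) with $|B^{i-1}\cap B^i|=d-1$ for all $i$, such that $a_j^\top v^+=1$ for all $j\in B^0$ and $a_j^\top v^-=1$ for all $j\in B^k$. Simple means every vertex lies on exactly $d$ facets. *)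

theory Defs
  imports "HOL-Analysis.Analysis"
begin

definition polyP :: "(nat \<Rightarrow> real^'d) \<Rightarrow> nat \<Rightarrow> (real^'d) set" where
  "polyP a n = {x. \<forall>j<n. a j \<bullet> x \<le> 1}"

definition minimal_description :: "(nat \<Rightarrow> real^'d) \<Rightarrow> nat \<Rightarrow> bool" where
  "minimal_description a n \<longleftrightarrow>
     (\<forall>j<n. {x. \<forall>i<n. i \<noteq> j \<longrightarrow> a i \<bullet> x \<le> 1} \<noteq> polyP a n)"

definition polar :: "(real^'d) set \<Rightarrow> (real^'d) set" where
  "polar S = {y. \<forall>x\<in>S. x \<bullet> y \<le> 1}"

definition simple_polytope :: "(real^'d) set \<Rightarrow> bool" where
  "simple_polytope S \<longleftrightarrow>
     (\<forall>v. v extreme_point_of S \<longrightarrow> card {F. F facet_of S \<and> v \<in> F} = CARD('d))"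

definition feasible_basis :: "(nat \<Rightarrow> real^'d) \<Rightarrow> nat \<Rightarrow> nat set \<Rightarrow> bool" where
  "feasible_basis a n B \<longleftrightarrow>
     B \<subseteq> {..<n} \<and> card B = CARD('d) \<and> inj_on a B \<and> independent (a ` B) \<and>
     (\<exists>v. v extreme_point_of polyP a n \<and> (\<forall>j\<in>B. a j \<bullet> v = 1))"

text \<open>A simplex path B^0,...,B^k (a list of length k+1) from vp to vm; its length is k.\<close>
definition simplex_path ::
  "(nat \<Rightarrow> real^'d) \<Rightarrow> nat \<Rightarrow> real^'d \<Rightarrow> real^'d \<Rightarrow> nat set list \<Rightarrow> bool" where
  "simplex_path a n vp vm Bs \<longleftrightarrow>
     Bs \<noteq> [] \<and>
     (\<forall>i<length Bs. feasible_basis a n (Bs ! i)) \<and>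
     (\<forall>i. 0 < i \<and> i < length Bs \<longrightarrow> card (Bs ! (i - 1) \<inter> Bs ! i) = CARD('d) - 1) \<and>
     (\<forall>j\<in>hd Bs. a j \<bullet> vp = 1) \<and>
     (\<forall>j\<in>last Bs. a j \<bullet> vm = 1)"

end

theory Submission
  imports Defs
begin

(* If a feasible basis B is tight at a point v of P, its d normals a_j are affinely independent
   points of the face {y in polar P. v y = 1}, which is therefore a facet of the polar and has
   diameter at most gamma. A pivot exchanges a single index, so any d consecutive bases of a
   simplex path share an index, and along the path every d - 1 pivots advance by at most gamma.
   The points c / (c vp) and c / (c vm) lie on the facets of the polar determined by vp and vm,
   and since 0 < c vp <= R and -R <= c vm < 0 they are at least 2/R apart. Hence a path of
   length k satisfies 2/R <= gamma (k / (d - 1) + 2). *)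

definition pivot_sequence :: "nat \<Rightarrow> 'a set list \<Rightarrow> bool" where
  "pivot_sequence d Bs \<longleftrightarrow>
     (\<forall>B\<in>set Bs. finite B \<and> card B = d) \<and>
     (\<forall>i. Suc i < length Bs \<longrightarrow> card (Bs ! i \<inter> Bs ! Suc i) = d - 1)"

lemma pivot_sequence_card_Inter:
  assumes "pivot_sequence d Bs" and "i + m < length Bs"
  shows "d - m \<le> card (\<Inter>l\<in>{i..i+m}. Bs ! l)"
  using assms(2)
proof (induction m)
  case 0
  then show ?case using assms(1) by (simp add: pivot_sequence_def)
next
  case (Suc m)
  define X where "X = (\<Inter>l\<in>{i..i+m}. Bs ! l)"
  define A where "A = Bs ! (i + m)"
  define C where "C = Bs ! Suc (i + m)"
  have Inter_Suc: "(\<Inter>l\<in>{i..i + Suc m}. Bs ! l) = X \<inter> C"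
    unfolding X_def C_def by (auto simp: le_Suc_eq)
  have "X \<subseteq> A"
    unfolding X_def A_def by auto
  moreover have "finite A" "card A = d" "card (A \<inter> C) = d - 1"
    using assms(1) Suc.prems unfolding pivot_sequence_def A_def C_def by auto
  ultimately have "card (X - C) \<le> card (A - C)" "card (A - C) \<le> 1"
    by (auto intro: card_mono) (simp add: card_Diff_subset_Int)
  moreover have "card X \<le> card (X \<inter> C) + card (X - C)"
    by (metis Int_Diff_Un card_Un_le)
  moreover have "d - m \<le> card X"
    using Suc by (simp add: X_def)
  ultimately show ?case
    unfolding Inter_Suc by linarith
qed

lemma pivot_sequence_common_element:
  assumes "pivot_sequence d Bs" and "i \<le> k" and "k < length Bs" and "k - i < d"
  obtains j where "\<And>l. i \<le> l \<Longrightarrow> l \<le> k \<Longrightarrow> j \<in> Bs ! l"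
proof -
  have "0 < card (\<Inter>l\<in>{i..k}. Bs ! l)"
    using pivot_sequence_card_Inter[OF assms(1), of i "k - i"] assms(2-4) by simp
  then obtain j where "j \<in> (\<Inter>l\<in>{i..k}. Bs ! l)"
    by (metis card.empty ex_in_conv less_irrefl)
  then show ?thesis
    by (intro that) auto
qed

lemma pivot_sequence_dist_stride:
  fixes f :: "'a \<Rightarrow> 'b::metric_space"
  assumes seq: "pivot_sequence d Bs" and "e < d" and "t * e < length Bs"
    and close: "\<forall>B\<in>set Bs. \<forall>j\<in>B. \<forall>j'\<in>B. dist (f j) (f j') \<le> \<gamma>"
    and start: "\<forall>j\<in>hd Bs. dist p (f j) \<le> \<gamma>"
  shows "\<forall>j\<in>Bs ! (t * e). dist p (f j) \<le> \<gamma> * (real t + 1)"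
  using \<open>t * e < length Bs\<close>
proof (induction t)
  case 0
  then show ?case
    using start by (simp add: hd_conv_nth)
next
  case (Suc t)
  have "Suc t * e - t * e < d"
    using \<open>e < d\<close> by simp
  then obtain j' where j': "\<And>l. t * e \<le> l \<Longrightarrow> l \<le> Suc t * e \<Longrightarrow> j' \<in> Bs ! l"
    using pivot_sequence_common_element[OF seq _ Suc.prems, of "t * e"] by force
  have "dist p (f j') \<le> \<gamma> * (real t + 1)"
    using Suc j'[of "t * e"] by simp
  show ?case
  proof
    fix j assume "j \<in> Bs ! (Suc t * e)"
    then have "dist (f j') (f j) \<le> \<gamma>"
      using close j'[of "Suc t * e"] nth_mem[OF Suc.prems] by simp
    then have "dist p (f j) \<le> \<gamma> * (real t + 1) + \<gamma>"
      using \<open>dist p (f j') \<le> \<gamma> * (real t + 1)\<close> dist_triangle[of p "f j" "f j'"] by linarith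
    then show "dist p (f j) \<le> \<gamma> * (real (Suc t) + 1)"
      by (simp add: algebra_simps)
  qed
qed

lemma pivot_sequence_dist_bound:
  fixes f :: "'a \<Rightarrow> 'b::metric_space"
  assumes seq: "pivot_sequence d Bs" and "Bs \<noteq> []" and "2 \<le> d" and "0 \<le> \<gamma>"
    and close: "\<forall>B\<in>set Bs. \<forall>j\<in>B. \<forall>j'\<in>B. dist (f j) (f j') \<le> \<gamma>"
    and start: "\<forall>j\<in>hd Bs. dist p (f j) \<le> \<gamma>"
    and finish: "\<forall>j\<in>last Bs. dist (f j) q \<le> \<gamma>"
  shows "dist p q \<le> \<gamma> * (real (length Bs - 1) / real (d - 1) + 2)"
proof -
  define k where "k = length Bs - 1"
  define e where "e = d - 1"
  define t where "t = k div e"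
  have "0 < e" "e < d" "k < length Bs"
    using \<open>2 \<le> d\<close> \<open>Bs \<noteq> []\<close> by (auto simp: e_def k_def)
  have "t * e \<le> k"
    by (simp add: t_def div_times_less_eq_dividend)
  have "k - t * e < d"
    using mod_less_divisor[OF \<open>0 < e\<close>, of k] div_mult_mod_eq[of k e] \<open>e < d\<close>
    unfolding t_def by linarith
  then obtain j where "\<And>l. t * e \<le> l \<Longrightarrow> l \<le> k \<Longrightarrow> j \<in> Bs ! l"
    using pivot_sequence_common_element[OF seq \<open>t * e \<le> k\<close> \<open>k < length Bs\<close>] by blast
  then have j: "j \<in> Bs ! (t * e)" "j \<in> Bs ! k"
    using \<open>t * e \<le> k\<close> by simp_all
  have "dist p (f j) \<le> \<gamma> * (real t + 1)"
    using pivot_sequence_dist_stride[OF seq \<open>e < d\<close> _ close start] \<open>t * e \<le> k\<close>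
      \<open>k < length Bs\<close> j(1) by simp
  moreover have "dist (f j) q \<le> \<gamma>"
    using finish j(2) \<open>Bs \<noteq> []\<close> by (simp add: last_conv_nth k_def)
  ultimately have "dist p q \<le> \<gamma> * (real t + 1) + \<gamma>"
    using dist_triangle[of p q "f j"] by linarith
  also have "\<dots> = \<gamma> * (real t + 2)"
    by (simp add: algebra_simps)
  also have "\<dots> \<le> \<gamma> * (real k / real e + 2)"
    using \<open>t * e \<le> k\<close> \<open>0 < e\<close> \<open>0 \<le> \<gamma>\<close>
    by (intro mult_left_mono) (simp_all add: field_simps flip: of_nat_mult)
  finally show ?thesis
    by (simp add: k_def e_def)
qed

lemma simplex_path_feasible_basis:
  "simplex_path a n vp vm Bs \<Longrightarrow> B \<in> set Bs \<Longrightarrow> feasible_basis a n B"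
  by (auto simp: simplex_path_def in_set_conv_nth)

lemma simplex_path_pivot_sequence:
  fixes a :: "nat \<Rightarrow> real^'d"
  assumes "simplex_path a n vp vm Bs"
  shows "pivot_sequence CARD('d) Bs"
proof -
  have "finite B \<and> card B = CARD('d)" if "B \<in> set Bs" for B
    using simplex_path_feasible_basis[OF assms that]
    by (simp add: feasible_basis_def card_ge_0_finite)
  moreover have "card (Bs ! i \<inter> Bs ! Suc i) = CARD('d) - 1" if "Suc i < length Bs" for i
  proof -
    have "\<forall>i. 0 < i \<and> i < length Bs \<longrightarrow> card (Bs ! (i - 1) \<inter> Bs ! i) = CARD('d) - 1"
      using assms by (simp add: simplex_path_def)
    then show ?thesis
      using that by (metis diff_Suc_1 zero_less_Suc)
  qed
  ultimately show ?thesis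
    by (simp add: pivot_sequence_def)
qed

lemma convex_polar: "convex (polar S)"
proof -
  have "polar S = (\<Inter>x\<in>S. {y. x \<bullet> y \<le> 1})"
    unfolding polar_def by auto
  then show ?thesis
    by (simp add: convex_INT convex_halfspace_le)
qed

lemma polar_subset_cball:
  assumes "0 < \<epsilon>" and "cball 0 \<epsilon> \<subseteq> S"
  shows "polar S \<subseteq> cball 0 (1 / \<epsilon>)"
proof
  fix y assume "y \<in> polar S"
  show "y \<in> cball 0 (1 / \<epsilon>)"
  proof (cases "y = 0")
    case True
    then show ?thesis using assms by simp
  next
    case False
    have "(\<epsilon> / norm y) *\<^sub>R y \<in> S"
      using assms(2) \<open>0 < \<epsilon>\<close> by (auto simp: subset_iff)
    then have "((\<epsilon> / norm y) *\<^sub>R y) \<bullet> y \<le> 1"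
      using \<open>y \<in> polar S\<close> unfolding polar_def by blast
    moreover have "((\<epsilon> / norm y) *\<^sub>R y) \<bullet> y = \<epsilon> * norm y"
      using False by (simp add: power2_norm_eq_inner[symmetric] power2_eq_square)
    ultimately have "\<epsilon> * norm y \<le> 1"
      by simp
    then show ?thesis
      using \<open>0 < \<epsilon>\<close> by (simp add: field_simps)
  qed
qed

lemma bounded_polar: "0 \<in> interior S \<Longrightarrow> bounded (polar S)"
  by (meson bounded_cball bounded_subset mem_interior_cball polar_subset_cball)

lemma cball_subset_polar:
  fixes S :: "(real^'d) set"
  assumes "0 < R" and "S \<subseteq> cball 0 R"
  shows "cball 0 (1 / R) \<subseteq> polar S"
proof
  fix y :: "real^'d" assume "y \<in> cball 0 (1 / R)"
  have "x \<bullet> y \<le> 1" if "x \<in> S" for x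
  proof -
    have "x \<bullet> y \<le> norm x * norm y"
      by (rule norm_cauchy_schwarz)
    also have "\<dots> \<le> R * (1 / R)"
      using assms that \<open>y \<in> cball 0 (1 / R)\<close> by (intro mult_mono) auto
    finally show ?thesis
      using \<open>0 < R\<close> by simp
  qed
  then show "y \<in> polar S"
    by (simp add: polar_def)
qed

lemma aff_dim_polar:
  fixes S :: "(real^'d) set"
  assumes "bounded S"
  shows "aff_dim (polar S) = CARD('d)"
proof -
  obtain R where "0 < R" "S \<subseteq> cball 0 R"
    using assms by (auto simp: bounded_pos subset_iff)
  then have "0 \<in> interior (polar S)"
    unfolding mem_interior_cball using cball_subset_polar by (intro exI[of _ "1 / R"]) auto
  then show ?thesis
    using aff_dim_nonempty_interior[of "polar S"] by auto
qed

lemma facet_of_supporting_hyperplane: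
  fixes Q :: "'a::euclidean_space set"
  assumes "convex Q" and "aff_dim Q = DIM('a)" and "\<forall>y\<in>Q. v \<bullet> y \<le> b"
    and "v \<noteq> 0" and "\<not> affine_dependent A" and "card A = DIM('a)"
    and "A \<subseteq> Q \<inter> {y. v \<bullet> y = b}"
  shows "Q \<inter> {y. v \<bullet> y = b} facet_of Q"
proof -
  have "aff_dim A = DIM('a) - 1"
    using aff_dim_affine_independent[OF assms(5)] assms(6) by simp
  then have "DIM('a) - 1 \<le> aff_dim (Q \<inter> {y. v \<bullet> y = b})"
    using aff_dim_subset[OF assms(7)] by simp
  moreover have "aff_dim (Q \<inter> {y. v \<bullet> y = b}) \<le> DIM('a) - 1"
    using aff_dim_subset[of "Q \<inter> {y. v \<bullet> y = b}" "{y. v \<bullet> y = b}"] \<open>v \<noteq> 0\<close> by auto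
  moreover have "Q \<inter> {y. v \<bullet> y = b} face_of Q"
    using assms(1,3) face_of_Int_supporting_hyperplane_le by blast
  moreover have "Q \<inter> {y. v \<bullet> y = b} \<noteq> {}"
    using assms(6,7) by (metis DIM_positive card.empty less_irrefl subset_empty)
  ultimately show ?thesis
    unfolding facet_of_def assms(2) by simp
qed

lemma constraint_normal_in_polar: "j < n \<Longrightarrow> a j \<in> polar (polyP a n)"
  by (simp add: polar_def polyP_def inner_commute)

lemma feasible_basis_facet_of_polar:
  fixes a :: "nat \<Rightarrow> real^'d"
  assumes "bounded (polyP a n)" and "feasible_basis a n B" and "\<forall>j\<in>B. a j \<bullet> v = 1"
    and "v \<in> polyP a n"
  shows "polar (polyP a n) \<inter> {y. v \<bullet> y = 1} facet_of polar (polyP a n)"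
    and "a ` B \<subseteq> polar (polyP a n) \<inter> {y. v \<bullet> y = 1}"
proof -
  show normals: "a ` B \<subseteq> polar (polyP a n) \<inter> {y. v \<bullet> y = 1}"
    using assms(2,3) by (auto simp: feasible_basis_def inner_commute intro!: constraint_normal_in_polar)
  have "B \<noteq> {}"
    using assms(2) by (auto simp: feasible_basis_def)
  then have "v \<noteq> 0"
    using assms(3) by auto
  have supporting: "\<forall>y\<in>polar (polyP a n). v \<bullet> y \<le> 1"
    using assms(4) by (simp add: polar_def)
  have full: "aff_dim (polar (polyP a n)) = DIM(real^'d)"
    using aff_dim_polar[OF assms(1)] by simp
  have "\<not> affine_dependent (a ` B)"
    using assms(2) affine_dependent_imp_dependent by (auto simp: feasible_basis_def)
  moreover have "card (a ` B) = DIM(real^'d)"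
    using assms(2) by (simp add: feasible_basis_def card_image)
  ultimately show "polar (polyP a n) \<inter> {y. v \<bullet> y = 1} facet_of polar (polyP a n)"
    by (rule facet_of_supporting_hyperplane[OF convex_polar full supporting \<open>v \<noteq> 0\<close> _ _ normals])
qed

lemma dist_basis_normal_le_facet_diameter:
  fixes a :: "nat \<Rightarrow> real^'d"
  assumes "0 \<in> interior (polyP a n)" and "bounded (polyP a n)"
    and "\<And>F. F facet_of polar (polyP a n) \<Longrightarrow> diameter F \<le> \<gamma>"
    and "feasible_basis a n B" and "\<forall>j\<in>B. a j \<bullet> v = 1" and "v \<in> polyP a n"
    and "y \<in> polar (polyP a n)" and "v \<bullet> y = 1" and "j \<in> B"
  shows "dist y (a j) \<le> \<gamma>"
proof -
  let ?F = "polar (polyP a n) \<inter> {y. v \<bullet> y = 1}"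
  have "bounded ?F"
    using bounded_polar[OF assms(1)] by (rule bounded_subset) auto
  moreover have "y \<in> ?F" "a j \<in> ?F"
    using assms(7-9) feasible_basis_facet_of_polar(2)[OF assms(2,4-6)] by auto
  ultimately have "dist y (a j) \<le> diameter ?F"
    by (rule diameter_bounded_bound)
  also have "\<dots> \<le> \<gamma>"
    using assms(3) feasible_basis_facet_of_polar(1)[OF assms(2,4-6)] .
  finally show ?thesis .
qed

lemma interior_zero_max_inner_pos:
  fixes u v :: "'a::real_inner"
  assumes "0 \<in> interior S" and "u \<noteq> 0" and "\<forall>x\<in>S. u \<bullet> x \<le> u \<bullet> v"
  shows "0 < u \<bullet> v"
proof -
  obtain \<epsilon> where "0 < \<epsilon>" "cball 0 \<epsilon> \<subseteq> S"
    using assms(1) mem_interior_cball by blast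
  then have "(\<epsilon> / norm u) *\<^sub>R u \<in> S"
    by (auto simp: subset_iff)
  then have "u \<bullet> ((\<epsilon> / norm u) *\<^sub>R u) \<le> u \<bullet> v"
    using assms(3) by blast
  moreover have "u \<bullet> ((\<epsilon> / norm u) *\<^sub>R u) = \<epsilon> * norm u"
    using \<open>u \<noteq> 0\<close> by (simp add: power2_norm_eq_inner[symmetric] power2_eq_square)
  ultimately show ?thesis
    using \<open>0 < \<epsilon>\<close> \<open>u \<noteq> 0\<close> by (smt (verit) mult_pos_pos zero_less_norm_iff)
qed

lemma scaled_objective_in_polar:
  assumes "\<forall>x\<in>S. u \<bullet> x \<le> u \<bullet> v" and "0 < u \<bullet> v"
  shows "(1 / (u \<bullet> v)) *\<^sub>R u \<in> polar S" and "v \<bullet> ((1 / (u \<bullet> v)) *\<^sub>R u) = 1"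
  using assms by (auto simp: polar_def inner_commute divide_simps)

lemma dist_opposite_scaled_ge:
  fixes u :: "'a::real_normed_vector"
  assumes "norm u = 1" and "0 < s" "s \<le> R" and "0 < t" "t \<le> R"
  shows "2 / R \<le> dist ((1 / s) *\<^sub>R u) ((1 / t) *\<^sub>R (- u))"
proof -
  have "dist ((1 / s) *\<^sub>R u) ((1 / t) *\<^sub>R (- u)) = 1 / s + 1 / t"
    using assms by (simp add: dist_norm flip: scaleR_add_left)
  moreover have "1 / R \<le> 1 / s" "1 / R \<le> 1 / t"
    using assms by (simp_all add: frac_le)
  ultimately show ?thesis
    by simp
qed

lemma simplex_path_dist_bound:
  fixes a :: "nat \<Rightarrow> real^'d"
  assumes "0 \<in> interior (polyP a n)" and "bounded (polyP a n)"
    and "\<And>F. F facet_of polar (polyP a n) \<Longrightarrow> diameter F \<le> \<gamma>" and "0 \<le> \<gamma>"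
    and "CARD('d) \<ge> 2" and path: "simplex_path a n vp vm Bs"
    and "vp \<in> polyP a n" and "p \<in> polar (polyP a n)" and "vp \<bullet> p = 1"
    and "vm \<in> polyP a n" and "q \<in> polar (polyP a n)" and "vm \<bullet> q = 1"
  shows "dist p q \<le> \<gamma> * (real (length Bs - 1) / real (CARD('d) - 1) + 2)"
proof (rule pivot_sequence_dist_bound[OF simplex_path_pivot_sequence[OF path]])
  let ?P = "polyP a n"
  have near: "dist y (a j) \<le> \<gamma>"
    if "feasible_basis a n B" "\<forall>j\<in>B. a j \<bullet> v = 1" "v \<in> ?P" "y \<in> polar ?P" "v \<bullet> y = 1" "j \<in> B"
    for B v y j
    using dist_basis_normal_le_facet_diameter[OF assms(1-3) that] .
  show "Bs \<noteq> []"
    using path by (simp add: simplex_path_def)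
  show "\<forall>B\<in>set Bs. \<forall>j\<in>B. \<forall>j'\<in>B. dist (a j) (a j') \<le> \<gamma>"
  proof (intro ballI)
    fix B j j' assume "B \<in> set Bs" "j \<in> B" "j' \<in> B"
    then have "feasible_basis a n B"
      using simplex_path_feasible_basis[OF path] by blast
    then obtain v where "v \<in> ?P" "\<forall>j\<in>B. a j \<bullet> v = 1"
      by (auto simp: feasible_basis_def extreme_point_of_def)
    moreover have "a j \<in> polar ?P"
      using \<open>feasible_basis a n B\<close> \<open>j \<in> B\<close> constraint_normal_in_polar
      by (auto simp: feasible_basis_def)
    ultimately show "dist (a j) (a j') \<le> \<gamma>"
      using near[OF \<open>feasible_basis a n B\<close>] \<open>j \<in> B\<close> \<open>j' \<in> B\<close> by (simp add: inner_commute)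
  qed
  have "\<forall>j\<in>hd Bs. a j \<bullet> vp = 1" "\<forall>j\<in>last Bs. a j \<bullet> vm = 1"
    using path by (simp_all add: simplex_path_def)
  moreover note simplex_path_feasible_basis[OF path hd_in_set[OF \<open>Bs \<noteq> []\<close>]]
    simplex_path_feasible_basis[OF path last_in_set[OF \<open>Bs \<noteq> []\<close>]]
  ultimately show "\<forall>j\<in>hd Bs. dist p (a j) \<le> \<gamma>" "\<forall>j\<in>last Bs. dist (a j) q \<le> \<gamma>"
    using near assms(7-12) by (simp_all add: dist_commute)
qed (use assms(4,5) in simp_all)

lemma objective_points_in_polar:
  fixes S :: "(real^'d) set"
  assumes "0 \<in> interior S" and "S \<subseteq> cball 0 R" and "norm c = 1"
    and "vp \<in> S" and "\<forall>x\<in>S. c \<bullet> x \<le> c \<bullet> vp"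
    and "vm \<in> S" and "\<forall>x\<in>S. c \<bullet> vm \<le> c \<bullet> x"
  obtains p q where "p \<in> polar S" "vp \<bullet> p = 1" "q \<in> polar S" "vm \<bullet> q = 1" "2 / R \<le> dist p q"
proof
  define p where "p = (1 / (c \<bullet> vp)) *\<^sub>R c"
  define q where "q = (1 / ((- c) \<bullet> vm)) *\<^sub>R (- c)"
  have "c \<noteq> 0"
    using \<open>norm c = 1\<close> by auto
  have "\<forall>x\<in>S. (- c) \<bullet> x \<le> (- c) \<bullet> vm"
    using assms(7) by simp
  have "0 < c \<bullet> vp" "0 < (- c) \<bullet> vm"
    using interior_zero_max_inner_pos[OF assms(1), of c vp]
      interior_zero_max_inner_pos[OF assms(1), of "- c" vm]
      assms(5) \<open>\<forall>x\<in>S. (- c) \<bullet> x \<le> (- c) \<bullet> vm\<close> \<open>c \<noteq> 0\<close> by auto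
  then show "p \<in> polar S" "vp \<bullet> p = 1" "q \<in> polar S" "vm \<bullet> q = 1"
    using scaled_objective_in_polar assms(5) \<open>\<forall>x\<in>S. (- c) \<bullet> x \<le> (- c) \<bullet> vm\<close>
    unfolding p_def q_def by blast+
  have "c \<bullet> vp \<le> R" "(- c) \<bullet> vm \<le> R"
    using norm_cauchy_schwarz[of c vp] norm_cauchy_schwarz[of "- c" vm] assms(2-4,6) by auto
  then show "2 / R \<le> dist p q"
    unfolding p_def q_def
    using dist_opposite_scaled_ge \<open>norm c = 1\<close> \<open>0 < c \<bullet> vp\<close> \<open>0 < (- c) \<bullet> vm\<close> by blast
qed

theorem lemma5p4:
  fixes a :: "nat \<Rightarrow> real^'d" and n :: nat and R \<gamma> :: real
    and c vp vm :: "real^'d"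
  assumes "CARD('d) \<ge> 2"
    and "R > 0"
    and "\<gamma> > 0"
    and "minimal_description a n"
    and "bounded (polyP a n)"
    and "polyP a n \<subseteq> cball 0 R"
    and "0 \<in> interior (polyP a n)"
    and "simple_polytope (polyP a n)"
    and "\<And>F. F facet_of polar (polyP a n) \<Longrightarrow> diameter F \<le> \<gamma>"
    and "c \<in> sphere 0 1"
    and "vp extreme_point_of polyP a n" and "\<forall>x\<in>polyP a n. c \<bullet> x \<le> c \<bullet> vp"
    and "vm extreme_point_of polyP a n" and "\<forall>x\<in>polyP a n. c \<bullet> vm \<le> c \<bullet> x"
  shows "\<not> (\<exists>Bs. simplex_path a n vp vm Bs \<and>
              real (length Bs - 1) < (real CARD('d) - 1) * (2 / (R * \<gamma>) - 2))"
proof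
  assume "\<exists>Bs. simplex_path a n vp vm Bs \<and>
              real (length Bs - 1) < (real CARD('d) - 1) * (2 / (R * \<gamma>) - 2)"
  then obtain Bs where path: "simplex_path a n vp vm Bs"
    and short: "real (length Bs - 1) < (real CARD('d) - 1) * (2 / (R * \<gamma>) - 2)"
    by blast
  have "vp \<in> polyP a n" "vm \<in> polyP a n" "norm c = 1"
    using assms(10,11,13) by (auto simp: extreme_point_of_def)
  then obtain p q where p: "p \<in> polar (polyP a n)" "vp \<bullet> p = 1"
    and q: "q \<in> polar (polyP a n)" "vm \<bullet> q = 1" and far: "2 / R \<le> dist p q"
    using objective_points_in_polar[OF assms(7,6) _ _ assms(12) _ assms(14)] by blast
  have "dist p q \<le> \<gamma> * (real (length Bs - 1) / real (CARD('d) - 1) + 2)"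
    by (rule simplex_path_dist_bound[OF assms(7,5) _ _ assms(1) path])
      (use assms(3,9) \<open>vp \<in> polyP a n\<close> \<open>vm \<in> polyP a n\<close> p q in auto)
  then have "2 / R \<le> \<gamma> * (real (length Bs - 1) / (real CARD('d) - 1) + 2)"
    using far assms(1) by (simp add: of_nat_diff)
  then have "2 / (R * \<gamma>) - 2 \<le> real (length Bs - 1) / (real CARD('d) - 1)"
    using assms(2,3) by (simp add: field_simps)
  then have "(real CARD('d) - 1) * (2 / (R * \<gamma>) - 2) \<le> real (length Bs - 1)"
    using assms(1) by (simp add: pos_le_divide_eq mult.commute)
  with short show False
    by linarith
qed

end
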